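(* Let $L_i,L_j$ be two smooth curves on a smooth surface $S$ meeting transversally at exactly one point $P$. Consider a sequence of blowups $Y\to S$: first blow up $P$; then, at each subsequent step, blow up one of the two points where the most recently created exceptional $(-1)$-curve meets its two neighbouring visible curves (the visible curves being the strict transforms of $L_i,L_j$ and of the exceptional curves). Let $E$ be the last exceptional curve, and let $w_i,w_j$ be the coefficients of $E$ in the total transforms of $L_i$ and $L_j$ on $Y$. Let $\Gamma$ be the dual graph of the visible curves on $Y$; it is a chain from $v_i$ (the vertex of $L_i$) to $v_j$ (the vertex of $L_j$), where an exceptional curve $C$ is marked $-C^2$ and $v_i$, $v_j$ are marked by the number of blowups centered at points of the strict transform of $L_i$, respectively $L_j$. Let $\Gamma_i$ be the subchain on the side of $E$ containing $v_i$ and $\Gamma_j$ the subchain on the side containing $v_j$ (both not containing $E$). Then (1) $\det\Gamma_i=w_i$ and $\det(\Gamma_i-v_i)=w_j$; (2) $\det\Gamma_j=w_j$ and $\det(\Gamma_j-v_j)=w_i$. Moreover, the assignment of $(w_i,w_j)$ to such a sequence of blowups is a bijection between all such sequences and the pairs of coprime positive integers $(w_i,w_j)$ (equivalently, positive rational numbers $w_j/w_i$ in lowest terms).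
   Context: The determinant of a chain (or of any marked graph) is the determinant of the matrix with the marks on the diagonal and $-1$ for each pair of adjacent vertices, $0$ otherwise; the empty chain has determinant $1$. $\Gamma_i-v_i$ is the chain $\Gamma_i$ with the vertex $v_i$ removed. *)

theory Defs
  imports "Jordan_Normal_Form.Determinant"
begin

text \<open>A visible curve is recorded as a triple (mark, ci, cj): its mark in the dual graph
  (for an exceptional curve C this is -C^2; for the strict transforms of L_i, L_j it is
  the number of blowups centred on them), and the coefficients of the curve in the total
  transforms of L_i and L_j (the strict transforms themselves have (1,0) and (0,1)).
  A configuration is the chain of visible curves (listed from v_i to v_j) together with
  the position of the most recently created exceptional curve.\<close>

type_synonym vcurve = "nat \<times> nat \<times> nat"
type_synonym config = "vcurve list \<times> nat"

text \<open>Blow up the intersection point of the adjacent visible curves at positions q, q+1: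
  both get one more blowup on them (mark + 1), a new (-1)-curve is inserted between them,
  whose coefficient in each total transform is the sum of the coefficients of the two
  curves through the blown-up point.\<close>
definition blow_between :: "vcurve list \<Rightarrow> nat \<Rightarrow> config" where
  "blow_between ch q =
     (case ch ! q of (m1, a1, b1) \<Rightarrow>
      case ch ! Suc q of (m2, a2, b2) \<Rightarrow>
        (take q ch @ [(m1 + 1, a1, b1), (1, a1 + a2, b1 + b2), (m2 + 1, a2, b2)]
           @ drop (q + 2) ch, Suc q))"

text \<open>One subsequent step: blow up the point where the last exceptional curve (position p)
  meets its left neighbour (False) or its right neighbour (True).\<close>
definition blow_step :: "config \<Rightarrow> bool \<Rightarrow> config" where
  "blow_step c d = (case c of (ch, p) \<Rightarrow>
      if d then blow_between ch p else blow_between ch (p - 1))"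

definition blowups :: "bool list \<Rightarrow> config" where
  "blowups ds = foldl blow_step (blow_between [(0, 1, 0), (0, 0, 1)] 0) ds"

definition chain_of :: "bool list \<Rightarrow> vcurve list" where
  "chain_of ds = fst (blowups ds)"

definition last_pos :: "bool list \<Rightarrow> nat" where
  "last_pos ds = snd (blowups ds)"

definition w_i :: "bool list \<Rightarrow> nat" where
  "w_i ds = fst (snd (chain_of ds ! last_pos ds))"

definition w_j :: "bool list \<Rightarrow> nat" where
  "w_j ds = snd (snd (chain_of ds ! last_pos ds))"

definition Gamma_i :: "bool list \<Rightarrow> nat list" where
  "Gamma_i ds = map fst (take (last_pos ds) (chain_of ds))"

definition Gamma_j :: "bool list \<Rightarrow> nat list" where
  "Gamma_j ds = map fst (drop (Suc (last_pos ds)) (chain_of ds))"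

definition chain_matrix :: "nat list \<Rightarrow> int mat" where
  "chain_matrix ms = mat (length ms) (length ms)
     (\<lambda>(i, j). if i = j then int (ms ! i) else if i + 1 = j \<or> j + 1 = i then -1 else 0)"

definition chain_det :: "nat list \<Rightarrow> int" where
  "chain_det ms = det (chain_matrix ms)"

end

(* The total transforms of L_i and L_j meet every exceptional curve trivially, so along the
   chain their coefficients obey the three-term recurrence x(k-1) + x(k+1) = m(k) x(k); at the
   two ends the marks of v_i and v_j give the same recurrence with outer values (0,-1) and
   (-1,0). Solutions of such a recurrence starting from 1 and m(s) are determinants of chains
   (continuants); running it from v_i and from v_j up to E gives (1) and (2).

   The coefficients of the two neighbours of the last exceptional curve E change by the
   mediant rule (L, R) -> (L + R, R) or (L, L + R), starting from (1,0), (0,1), and E has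
   coefficient L + R. Read from the first step on instead, this is the Calkin-Wilf tree,
   which lists every coprime pair of positive integers exactly once. *)

theory Submission
  imports Defs "HOL-Library.Product_Plus"
begin

lemma chain_matrix_carrier: "chain_matrix ms \<in> carrier_mat (length ms) (length ms)"
  unfolding chain_matrix_def by simp

lemma chain_det_Nil [simp]: "chain_det [] = 1"
  unfolding chain_det_def by (rule det_dim_zero) (simp add: chain_matrix_def)

lemma chain_det_singleton [simp]: "chain_det [m] = int m"
proof -
  have "det (chain_matrix [m]) = chain_matrix [m] $$ (0, 0)"
    using chain_matrix_carrier[of "[m]"]
    by (subst laplace_expansion_row[of _ 1 0]) (auto simp: cofactor_def mat_delete_def)
  then show ?thesis unfolding chain_det_def by (simp add: chain_matrix_def)
qed

lemma chain_det_Cons_Cons [simp]: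
  "chain_det (m # n # ms) = int m * chain_det (n # ms) - chain_det ms"
proof -
  define A where "A = chain_matrix (m # n # ms)"
  define B where "B = mat_delete A 0 1"
  have A: "A \<in> carrier_mat (length ms + 2) (length ms + 2)"
    unfolding A_def using chain_matrix_carrier[of "m # n # ms"] by simp
  have B: "B \<in> carrier_mat (Suc (length ms)) (Suc (length ms))"
    unfolding B_def A_def by (simp add: chain_matrix_def mat_delete_def)
  have "det A = (\<Sum>j<length ms + 2. A $$ (0, j) * cofactor A 0 j)"
    by (rule laplace_expansion_row[OF A]) simp
  also have "\<dots> = (\<Sum>j\<in>{0, 1}. A $$ (0, j) * cofactor A 0 j)"
    by (rule sum.mono_neutral_right) (auto simp: A_def chain_matrix_def)
  also have "\<dots> = int m * det (mat_delete A 0 0) + det B"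
    by (simp add: A_def B_def chain_matrix_def cofactor_def)
  also have "mat_delete A 0 0 = chain_matrix (n # ms)"
    by (rule eq_matI) (auto simp: A_def chain_matrix_def mat_delete_def)
  also have "det B = (\<Sum>i<Suc (length ms). B $$ (i, 0) * cofactor B i 0)"
    by (rule laplace_expansion_column[OF B]) simp
  also have "\<dots> = (\<Sum>i\<in>{0}. B $$ (i, 0) * cofactor B i 0)"
    by (rule sum.mono_neutral_right) (auto simp: B_def A_def chain_matrix_def mat_delete_def)
  also have "\<dots> = - det (mat_delete B 0 0)"
    by (simp add: B_def A_def chain_matrix_def mat_delete_def cofactor_def)
  also have "mat_delete B 0 0 = chain_matrix ms"
    by (rule eq_matI) (auto simp: B_def A_def chain_matrix_def mat_delete_def)
  finally show ?thesis unfolding A_def chain_det_def by simp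
qed

lemma chain_det_snoc_snoc:
  "chain_det (ms @ [m, n]) = int n * chain_det (ms @ [m]) - chain_det ms"
  by (induction ms rule: induct_list012) (simp_all add: right_diff_distrib mult.left_commute)

lemma chain_det_upward_recurrence:
  fixes x :: "nat \<Rightarrow> int"
  assumes start: "x s = 1" "s < e \<Longrightarrow> x (Suc s) = int (m s)"
    and rec: "\<And>k. s < k \<Longrightarrow> k < e \<Longrightarrow> x (Suc k) = int (m k) * x k - x (k - 1)"
  shows "s \<le> k \<Longrightarrow> k \<le> e \<Longrightarrow> x k = chain_det (map m [s..<k])"
proof (induction k rule: less_induct)
  case (less k)
  show ?case
  proof (cases "k \<le> Suc s")
    case True
    then show ?thesis using start less.prems by (auto simp: le_Suc_eq)
  next
    case False
    then obtain j where j: "k = Suc (Suc j)" "s \<le> j"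
      by (metis Suc_le_D not_less_eq_eq)
    have "map m [s..<k] = map m [s..<j] @ [m j, m (Suc j)]"
      using j by simp
    moreover have "x k = int (m (Suc j)) * x (Suc j) - x j"
      using rec[of "Suc j"] j less.prems by simp
    ultimately show ?thesis
      using less.IH[of "Suc j"] less.IH[of j] j less.prems by (simp add: chain_det_snoc_snoc)
  qed
qed

lemma chain_det_downward_recurrence:
  fixes x :: "nat \<Rightarrow> int"
  assumes start: "x e = 1" "s < e \<Longrightarrow> x (e - 1) = int (m e)"
    and rec: "\<And>k. s < k \<Longrightarrow> k < e \<Longrightarrow> x (k - 1) = int (m k) * x k - x (Suc k)"
  shows "s \<le> k \<Longrightarrow> k \<le> e \<Longrightarrow> x k = chain_det (map m [Suc k..<Suc e])"
proof (induction "e - k" arbitrary: k rule: less_induct)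
  case less
  show ?case
  proof (cases "e \<le> Suc k")
    case True
    then show ?thesis using start less.prems by (auto simp: le_Suc_eq)
  next
    case False
    then have upt: "[Suc k..<Suc e] = Suc k # [Suc (Suc k)..<Suc e]"
      "[Suc (Suc k)..<Suc e] = Suc (Suc k) # [Suc (Suc (Suc k))..<Suc e]"
      by (simp_all add: upt_rec)
    have "x k = int (m (Suc k)) * x (Suc k) - x (Suc (Suc k))"
      using rec[of "Suc k"] False less.prems by simp
    also have "\<dots> = chain_det (map m [Suc k..<Suc e])"
      using less.hyps[of "Suc k"] less.hyps[of "Suc (Suc k)"] False less.prems
      by (simp add: upt del: upt_Suc)
    finally show ?thesis .
  qed
qed

definition scale :: "nat \<Rightarrow> nat \<times> nat \<Rightarrow> nat \<times> nat" where
  "scale c x = (c * fst x, c * snd x)"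

definition valid_chain :: "vcurve list \<Rightarrow> bool" where
  "valid_chain ch \<longleftrightarrow> 2 \<le> length ch
     \<and> snd (ch ! 0) = (1, 0) \<and> snd (ch ! 1) = (fst (ch ! 0), 1)
     \<and> snd (ch ! (length ch - 1)) = (0, 1)
     \<and> snd (ch ! (length ch - 2)) = (1, fst (ch ! (length ch - 1)))
     \<and> (\<forall>k. 0 < k \<and> Suc k < length ch \<longrightarrow>
          snd (ch ! (k - 1)) + snd (ch ! Suc k) = scale (fst (ch ! k)) (snd (ch ! k)))"

lemma blow_between_eq:
  "blow_between ch q =
     (take q ch @ [(fst (ch ! q) + 1, snd (ch ! q)), (1, snd (ch ! q) + snd (ch ! Suc q)),
        (fst (ch ! Suc q) + 1, snd (ch ! Suc q))] @ drop (q + 2) ch, Suc q)"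
  by (simp add: blow_between_def split: prod.split)

lemma length_blow_between [simp]:
  "Suc q < length ch \<Longrightarrow> length (fst (blow_between ch q)) = Suc (length ch)"
  by (simp add: blow_between_eq)

lemma nth_blow_between:
  assumes "Suc q < length ch"
  shows "fst (blow_between ch q) ! k =
    (if k < q then ch ! k
     else if k = q then (fst (ch ! q) + 1, snd (ch ! q))
     else if k = Suc q then (1, snd (ch ! q) + snd (ch ! Suc q))
     else if k = Suc (Suc q) then (fst (ch ! Suc q) + 1, snd (ch ! Suc q))
     else ch ! (k - 1))"
  using assms by (auto simp: blow_between_eq nth_append intro!: arg_cong[where f = "(!) ch"])

lemma valid_chain_blow_between_interior:
  assumes valid: "valid_chain ch" and q: "Suc q < length ch" and k: "0 < k" "k < length ch"
  defines "ch' \<equiv> fst (blow_between ch q)"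
  shows "snd (ch' ! (k - 1)) + snd (ch' ! Suc k) = scale (fst (ch' ! k)) (snd (ch' ! k))"
proof -
  define c where "c k = snd (ch ! k)" for k
  note nth' = nth_blow_between[OF q, folded ch'_def]
  have rel: "c (k - 1) + c (Suc k) = scale (fst (ch ! k)) (c k)" if "0 < k" "Suc k < length ch" for k
    using valid that unfolding valid_chain_def c_def by blast
  consider "Suc k \<le> q" | "k = q" | "k = Suc q" | "k = Suc (Suc q)" | "Suc (Suc q) < k"
    by linarith
  then show ?thesis
  proof cases
    case 1
    then show ?thesis using rel[of k] k q by (auto simp: nth' c_def)
  next
    case 2
    then show ?thesis using rel[of k] k q by (auto simp: nth' c_def scale_def prod_eq_iff)
  next
    case 3
    then show ?thesis by (auto simp: nth' scale_def prod_eq_iff)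
  next
    case 4
    then show ?thesis using rel[of "Suc q"] k q by (auto simp: nth' c_def scale_def prod_eq_iff)
  next
    case 5
    define j where "j = k - 3"
    have j: "k = Suc (Suc (Suc j))" "q \<le> j" using 5 unfolding j_def by linarith+
    then show ?thesis using rel[of "Suc (Suc j)"] k q by (auto simp: nth' c_def)
  qed
qed

lemma valid_chain_blow_between:
  assumes valid: "valid_chain ch" and q: "Suc q < length ch"
  shows "valid_chain (fst (blow_between ch q))"
proof -
  define n where "n = length ch"
  define c where "c k = snd (ch ! k)" for k
  define ch' where "ch' = fst (blow_between ch q)"
  note nth' = nth_blow_between[OF q, folded ch'_def]
  have ends: "2 \<le> n" "c 0 = (1, 0)" "c 1 = (fst (ch ! 0), 1)" "c (n - 1) = (0, 1)"
    "c (n - 2) = (1, fst (ch ! (n - 1)))"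
    using valid unfolding valid_chain_def c_def n_def by auto
  have left: "snd (ch' ! 0) = (1, 0) \<and> snd (ch' ! 1) = (fst (ch' ! 0), 1)"
  proof -
    consider "q = 0" | "q = 1" | "1 < q" by linarith
    then show ?thesis using ends by cases (auto simp: nth' c_def)
  qed
  have right: "snd (ch' ! n) = (0, 1) \<and> snd (ch' ! (n - 1)) = (1, fst (ch' ! n))"
  proof -
    consider "n = Suc (Suc q)" | "n = Suc (Suc (Suc q))" | "Suc (Suc (Suc q)) < n"
      using q n_def by linarith
    then show ?thesis
    proof cases
      case 3
      define j where "j = n - 4"
      have "n = Suc (Suc (Suc (Suc j)))" "q \<le> j" using 3 unfolding j_def by linarith+
      then show ?thesis using ends by (auto simp: nth' c_def)
    qed (use ends in \<open>auto simp: nth' c_def\<close>)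
  qed
  have "length ch' = Suc n" using q by (simp add: ch'_def n_def)
  then show ?thesis
    using ends left right valid_chain_blow_between_interior[OF valid q, folded ch'_def]
    unfolding ch'_def[symmetric] valid_chain_def by (auto simp: n_def)
qed

lemma valid_chain_interior:
  assumes "valid_chain ch" "0 < k" "Suc k < length ch"
  shows "fst (ch ! k) * fst (snd (ch ! k)) = fst (snd (ch ! (k - 1))) + fst (snd (ch ! Suc k))"
    and "fst (ch ! k) * snd (snd (ch ! k)) = snd (snd (ch ! (k - 1))) + snd (snd (ch ! Suc k))"
  using assms unfolding valid_chain_def scale_def by (auto simp: prod_eq_iff)

lemma valid_chain_det_left:
  assumes valid: "valid_chain ch" and p: "0 < p" "Suc p < length ch"
  shows "chain_det (map fst (take p ch)) = int (fst (snd (ch ! p)))"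
    and "chain_det (tl (map fst (take p ch))) = int (snd (snd (ch ! p)))"
proof -
  define m where "m k = fst (ch ! k)" for k
  define a where "a k = int (fst (snd (ch ! k)))" for k
  define b where "b k = int (snd (snd (ch ! k)))" for k
  have rec: "a (Suc k) = int (m k) * a k - a (k - 1)" "b (Suc k) = int (m k) * b k - b (k - 1)"
    if "0 < k" "k < length ch - 1" for k
    using valid_chain_interior[OF valid, of k] that by (simp_all add: m_def a_def b_def flip: of_nat_mult)
  have ends: "a 0 = 1" "a 1 = m 0" "b 1 = 1" "b 0 = 0"
    using valid unfolding valid_chain_def m_def a_def b_def by auto
  have take: "map fst (take p ch) = map m [0..<p]"
    using p by (intro nth_equalityI) (auto simp: m_def)
  have "a p = chain_det (map m [0..<p])"
    by (rule chain_det_upward_recurrence[of a 0 "length ch - 1"]) (use rec ends p in auto)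
  then show "chain_det (map fst (take p ch)) = int (fst (snd (ch ! p)))"
    by (simp add: take a_def)
  have "b p = chain_det (map m [1..<p])"
    by (rule chain_det_upward_recurrence[of b 1 "length ch - 1"]) (use rec ends p in auto)
  then show "chain_det (tl (map fst (take p ch))) = int (snd (snd (ch ! p)))"
    by (simp add: take b_def map_tl[symmetric])
qed

lemma valid_chain_det_right:
  assumes valid: "valid_chain ch" and p: "0 < p" "Suc p < length ch"
  shows "chain_det (map fst (drop (Suc p) ch)) = int (snd (snd (ch ! p)))"
    and "chain_det (butlast (map fst (drop (Suc p) ch))) = int (fst (snd (ch ! p)))"
proof -
  define n where "n = length ch"
  define m where "m k = fst (ch ! k)" for k
  define a where "a k = int (fst (snd (ch ! k)))" for k
  define b where "b k = int (snd (snd (ch ! k)))" for k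
  have rec: "a (k - 1) = int (m k) * a k - a (Suc k)" "b (k - 1) = int (m k) * b k - b (Suc k)"
    if "0 < k" "Suc k < n" for k
    using valid_chain_interior[OF valid, of k] that
    by (simp_all add: n_def m_def a_def b_def flip: of_nat_mult)
  have ends: "a (n - 1) = 0" "a (n - 2) = 1" "b (n - 1) = 1" "b (n - 2) = m (n - 1)"
    using valid unfolding valid_chain_def n_def m_def a_def b_def by auto
  have drop: "map fst (drop (Suc p) ch) = map m [Suc p..<n]"
    by (intro nth_equalityI) (auto simp: n_def m_def)
  have "b p = chain_det (map m [Suc p..<Suc (n - 1)])"
    by (rule chain_det_downward_recurrence[of b "n - 1" 0]) (use rec ends p n_def in \<open>auto simp: numeral_2_eq_2\<close>)
  moreover have "Suc (n - 1) = n" using p by (simp add: n_def)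
  ultimately show "chain_det (map fst (drop (Suc p) ch)) = int (snd (snd (ch ! p)))"
    by (simp add: drop b_def)
  have "a (n - 2 - 1) = int (m (n - 2))" if "0 < n - 2"
  proof -
    define j where "j = n - 3"
    have "n = Suc (Suc (Suc j))" using that unfolding j_def by linarith
    then show ?thesis using rec(1)[of "Suc j"] ends by simp
  qed
  then have "a p = chain_det (map m [Suc p..<Suc (n - 2)])"
    by (intro chain_det_downward_recurrence[of a "n - 2" 0]) (use rec ends p n_def in auto)
  moreover have "butlast [Suc p..<n] = [Suc p..<Suc (n - 2)]"
    using p by (cases n) (auto simp: n_def)
  ultimately show "chain_det (butlast (map fst (drop (Suc p) ch))) = int (fst (snd (ch ! p)))"
    by (simp add: drop a_def map_butlast[symmetric])
qed

lemma valid_chain_minus_one_curve: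
  assumes "valid_chain ch" "0 < p" "Suc p < length ch" "fst (ch ! p) = 1"
  shows "snd (ch ! p) = snd (ch ! (p - 1)) + snd (ch ! Suc p)"
  using valid_chain_interior[OF assms(1-3)] assms(4) by (simp add: prod_eq_iff)

fun mediant_step :: "(nat \<times> nat) \<times> (nat \<times> nat) \<Rightarrow> bool \<Rightarrow> (nat \<times> nat) \<times> (nat \<times> nat)" where
  "mediant_step (L, R) d = (if d then (L + R, R) else (L, L + R))"

definition neighbour_coeffs :: "bool list \<Rightarrow> (nat \<times> nat) \<times> (nat \<times> nat)" where
  "neighbour_coeffs ds = foldl mediant_step ((1, 0), (0, 1)) ds"

lemma blowups_snoc: "blowups (ds @ [d]) = blow_step (blowups ds) d"
  by (simp add: blowups_def)

lemma blowups_invariant: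
  assumes "blowups ds = (ch, p)"
  shows "valid_chain ch \<and> 0 < p \<and> Suc p < length ch \<and> fst (ch ! p) = 1
    \<and> (snd (ch ! (p - 1)), snd (ch ! Suc p)) = neighbour_coeffs ds"
  using assms
proof (induction ds arbitrary: ch p rule: rev_induct)
  case Nil
  then have "ch = [(1, 1, 0), (1, 1, 1), (1, 0, 1)] \<and> p = 1"
    by (auto simp: blowups_def blow_between_def)
  then show ?case
    by (auto simp: valid_chain_def neighbour_coeffs_def scale_def less_Suc_eq)
next
  case (snoc d ds)
  obtain ch0 p0 where blowups: "blowups ds = (ch0, p0)" by fastforce
  obtain L R where LR: "neighbour_coeffs ds = (L, R)" by (cases "neighbour_coeffs ds")
  have IH: "valid_chain ch0" "0 < p0" "Suc p0 < length ch0" "fst (ch0 ! p0) = 1"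
    "snd (ch0 ! (p0 - 1)) = L" "snd (ch0 ! Suc p0) = R"
    using snoc.IH[OF blowups] LR by auto
  have E: "snd (ch0 ! p0) = L + R"
    using valid_chain_minus_one_curve[OF IH(1-4)] IH(5,6) by simp
  define q where "q = (if d then p0 else p0 - 1)"
  have "(ch, p) = blow_between ch0 q"
    using snoc.prems by (auto simp: blowups_snoc blowups blow_step_def q_def)
  then have q: "Suc q < length ch0" "p = Suc q" "ch = fst (blow_between ch0 q)"
    using IH(2,3) by (auto simp: q_def blow_between_eq)
  have "neighbour_coeffs (ds @ [d]) = mediant_step (L, R) d"
    using LR by (simp add: neighbour_coeffs_def)
  then show ?case
    using valid_chain_blow_between[OF IH(1) q(1)] IH E q
    by (auto simp: nth_blow_between q_def)
qed

fun calkin_wilf :: "bool list \<Rightarrow> nat \<times> nat" where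
  "calkin_wilf [] = (1, 1)"
| "calkin_wilf (d # ds) =
     (let (a, b) = calkin_wilf ds in if d then (a, a + b) else (a + b, b))"

lemma sum_foldl_mediant_step:
  "case_prod (+) (foldl mediant_step (l, r) ds)
     = scale (fst (calkin_wilf ds)) l + scale (snd (calkin_wilf ds)) r"
proof (induction ds arbitrary: l r)
  case (Cons d ds)
  then show ?case
    by (cases d) (auto simp: scale_def split_beta algebra_simps)
qed (simp add: scale_def)

lemma calkin_wilf_nonzero [simp]: "fst (calkin_wilf ds) \<noteq> 0" "snd (calkin_wilf ds) \<noteq> 0"
  by (induction ds) (auto simp: split_beta)

lemma calkin_wilf_coprime: "coprime (fst (calkin_wilf ds)) (snd (calkin_wilf ds))"
  by (induction ds) (auto simp: split_beta coprime_iff_gcd_eq_1 gcd_add1 gcd_add2)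

lemma inj_calkin_wilf: "inj calkin_wilf"
proof (rule injI)
  show "calkin_wilf ds = calkin_wilf es \<Longrightarrow> ds = es" for ds es
  proof (induction ds arbitrary: es)
    case Nil
    then show ?case by (cases es) (auto simp: split_beta split: if_splits)
  next
    case (Cons d ds)
    then show ?case
      by (cases es) (auto simp: split_beta prod_eq_iff split: if_splits)
  qed
qed

lemma calkin_wilf_surj:
  assumes "0 < a" "0 < b" "coprime a b"
  shows "\<exists>ds. calkin_wilf ds = (a, b)"
  using assms
proof (induction "a + b" arbitrary: a b rule: less_induct)
  case less
  consider "a = b" | "a < b" | "b < a" by linarith
  then show ?case
  proof cases
    case 1
    with less.prems have "a = 1" "b = 1" by auto
    then show ?thesis using calkin_wilf.simps(1) by blast
  next
    case 2
    with less.prems have "coprime a (b - a)"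
      using gcd_diff1_nat[of a b] by (simp add: coprime_iff_gcd_eq_1 gcd.commute)
    with less.hyps[of a "b - a"] 2 less.prems obtain ds where "calkin_wilf ds = (a, b - a)"
      by auto
    with 2 have "calkin_wilf (True # ds) = (a, b)" by simp
    then show ?thesis ..
  next
    case 3
    with less.prems have "coprime (a - b) b"
      using gcd_diff1_nat[of b a] by (simp add: coprime_iff_gcd_eq_1)
    with less.hyps[of "a - b" b] 3 less.prems obtain ds where "calkin_wilf ds = (a - b, b)"
      by auto
    with 3 have "calkin_wilf (False # ds) = (a, b)" by simp
    then show ?thesis ..
  qed
qed

lemma weights_eq_calkin_wilf: "(w_i ds, w_j ds) = calkin_wilf ds"
proof -
  obtain ch p where blowups: "blowups ds = (ch, p)" by fastforce
  note inv = blowups_invariant[OF blowups]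
  have "snd (ch ! p) = snd (ch ! (p - 1)) + snd (ch ! Suc p)"
    using valid_chain_minus_one_curve[of ch p] inv by simp
  also have "\<dots> = case_prod (+) (neighbour_coeffs ds)"
    using inv by (metis case_prod_conv)
  also have "\<dots> = calkin_wilf ds"
    by (simp add: neighbour_coeffs_def sum_foldl_mediant_step scale_def)
  finally show ?thesis
    using blowups by (simp add: w_i_def w_j_def chain_of_def last_pos_def)
qed

lemma range_calkin_wilf: "range calkin_wilf = {(a, b). 0 < a \<and> 0 < b \<and> coprime a b}"
proof (intro equalityI subsetI)
  show "x \<in> {(a, b). 0 < a \<and> 0 < b \<and> coprime a b}" if "x \<in> range calkin_wilf" for x
    using that calkin_wilf_coprime by (auto simp: split_beta simp flip: neq0_conv)
  show "x \<in> range calkin_wilf" if "x \<in> {(a, b). 0 < a \<and> 0 < b \<and> coprime a b}" for x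
    using that calkin_wilf_surj by (auto simp: image_iff eq_commute)
qed

lemma blowup_determinants:
  "chain_det (Gamma_i ds) = int (w_i ds) \<and> chain_det (tl (Gamma_i ds)) = int (w_j ds)
   \<and> chain_det (Gamma_j ds) = int (w_j ds) \<and> chain_det (butlast (Gamma_j ds)) = int (w_i ds)"
proof -
  obtain ch p where blowups: "blowups ds = (ch, p)" by fastforce
  then have "valid_chain ch" "0 < p" "Suc p < length ch"
    using blowups_invariant by auto
  from valid_chain_det_left[OF this] valid_chain_det_right[OF this] show ?thesis
    using blowups by (simp add: Gamma_i_def Gamma_j_def w_i_def w_j_def chain_of_def last_pos_def)
qed

theorem theorem3p5:
  shows "(\<forall>ds. chain_det (Gamma_i ds) = int (w_i ds)
             \<and> chain_det (tl (Gamma_i ds)) = int (w_j ds)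
             \<and> chain_det (Gamma_j ds) = int (w_j ds)
             \<and> chain_det (butlast (Gamma_j ds)) = int (w_i ds))
       \<and> bij_betw (\<lambda>ds. (w_i ds, w_j ds)) UNIV
           {(a, b). 0 < a \<and> 0 < b \<and> coprime a (b::nat)}"
  unfolding weights_eq_calkin_wilf bij_betw_def
  using blowup_determinants inj_calkin_wilf range_calkin_wilf by simp

end
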